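(* Let $G=(V,E)$ be a finite, simple, connected graph which is locally connected and reflective, and assume $G$ is distance regular with intersection array $(b_0,b_1,\ldots,b_{L-1};c_1=1,\ldots,c_L)$. Then the Ollivier curvature of every edge is $\kappa(x,y)=1+b_0-b_1$. Moreover $G$ is Lichnerowicz sharp, i.e. the smallest positive eigenvalue $\lambda$ of $-\Delta$ satisfies $\lambda=1+b_0-b_1$.
   Context: Locally connected: for every vertex $v$ the subgraph induced on the neighbors of $v$ is connected. $d$ is the combinatorial distance. Distance regular with intersection array $(b_0,\ldots,b_{L-1};c_1,\ldots,c_L)$: $G$ has diameter $L$ and for every $x$ and every $z$ with $d(x,z)=n$, $z$ has $b_n$ neighbors at distance $n+1$ from $x$ and $c_n$ neighbors at distance $n-1$ from $x$ (with the usual convention $b_L=0$). Laplacian $\Delta f(x)=\sum_{y\sim x}(f(y)-f(x))$. Ollivier curvature: $\kappa(x,y)=\inf\{\Delta f(x)-\Delta f(y): f(y)-f(x)=1,\ \max_{u\sim v}|f(u)-f(v)|=1\}$. For adjacent $x\sim y$ let $V_x^y=\{v: d(v,x)<d(v,y)\}$, $V^{xy}=\{v:d(v,x)=d(v,y)\}$. A reflection from $x$ to $y$ is a graph automorphism $\phi$ with $\phi\circ\phi=\mathrm{id}$, $\phi(x)=y$, such that the edges between $V_x^y$ and $V_y^x$ are exactly $\{\{x',\phi(x')\}:x'\in V_x^y\}$ and $\phi$ fixes $V^{xy}$ pointwise. $G$ is reflective if every edge admits a reflection. *)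

theory Defs
  imports Complex_Main
begin

definition simple_graph :: "'a set \<Rightarrow> ('a \<Rightarrow> 'a \<Rightarrow> bool) \<Rightarrow> bool" where
  "simple_graph V E \<longleftrightarrow> finite V \<and> (\<forall>u v. E u v \<longrightarrow> u \<in> V \<and> v \<in> V)
     \<and> (\<forall>u v. E u v \<longrightarrow> E v u) \<and> (\<forall>u. \<not> E u u)"

definition connected_graph :: "'a set \<Rightarrow> ('a \<Rightarrow> 'a \<Rightarrow> bool) \<Rightarrow> bool" where
  "connected_graph V E \<longleftrightarrow> (\<forall>u\<in>V. \<forall>v\<in>V. E\<^sup>*\<^sup>* u v)"

definition gdist :: "('a \<Rightarrow> 'a \<Rightarrow> bool) \<Rightarrow> 'a \<Rightarrow> 'a \<Rightarrow> nat" where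
  "gdist E u v = (LEAST n. (E ^^ n) u v)"

definition nbhd :: "('a \<Rightarrow> 'a \<Rightarrow> bool) \<Rightarrow> 'a \<Rightarrow> 'a set" where
  "nbhd E v = {w. E v w}"

definition locally_connected :: "'a set \<Rightarrow> ('a \<Rightarrow> 'a \<Rightarrow> bool) \<Rightarrow> bool" where
  "locally_connected V E \<longleftrightarrow> (\<forall>v\<in>V. connected_graph (nbhd E v)
      (\<lambda>a b. E a b \<and> a \<in> nbhd E v \<and> b \<in> nbhd E v))"

text \<open>Distance regular with intersection array (b 0, ..., b (L-1); c 1, ..., c L),
  with the convention b L = 0 (forced, as no vertex is at distance L+1).\<close>
definition distance_regular ::
  "'a set \<Rightarrow> ('a \<Rightarrow> 'a \<Rightarrow> bool) \<Rightarrow> nat \<Rightarrow> (nat \<Rightarrow> nat) \<Rightarrow> (nat \<Rightarrow> nat) \<Rightarrow> bool" where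
  "distance_regular V E L b c \<longleftrightarrow>
     L = Max {gdist E x z | x z. x \<in> V \<and> z \<in> V} \<and>
     (\<forall>x\<in>V. \<forall>z\<in>V. \<forall>n. gdist E x z = n \<longrightarrow>
        card {w. E z w \<and> gdist E x w = n + 1} = b n \<and>
        (n \<ge> 1 \<longrightarrow> card {w. E z w \<and> gdist E x w = n - 1} = c n))"

definition laplacian :: "('a \<Rightarrow> 'a \<Rightarrow> bool) \<Rightarrow> ('a \<Rightarrow> real) \<Rightarrow> 'a \<Rightarrow> real" where
  "laplacian E f x = (\<Sum>y\<in>nbhd E x. f y - f x)"

definition ollivier_curvature :: "('a \<Rightarrow> 'a \<Rightarrow> bool) \<Rightarrow> 'a \<Rightarrow> 'a \<Rightarrow> real" where
  "ollivier_curvature E x y = Inf {laplacian E f x - laplacian E f y | f.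
       f y - f x = 1 \<and> Max {\<bar>f u - f v\<bar> | u v. E u v} = 1}"

definition near_side :: "'a set \<Rightarrow> ('a \<Rightarrow> 'a \<Rightarrow> bool) \<Rightarrow> 'a \<Rightarrow> 'a \<Rightarrow> 'a set" where
  "near_side V E x y = {v\<in>V. gdist E v x < gdist E v y}"

definition equi_side :: "'a set \<Rightarrow> ('a \<Rightarrow> 'a \<Rightarrow> bool) \<Rightarrow> 'a \<Rightarrow> 'a \<Rightarrow> 'a set" where
  "equi_side V E x y = {v\<in>V. gdist E v x = gdist E v y}"

definition is_reflection :: "'a set \<Rightarrow> ('a \<Rightarrow> 'a \<Rightarrow> bool) \<Rightarrow> 'a \<Rightarrow> 'a \<Rightarrow> ('a \<Rightarrow> 'a) \<Rightarrow> bool" where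
  "is_reflection V E x y \<phi> \<longleftrightarrow>
     bij_betw \<phi> V V \<and> (\<forall>u\<in>V. \<forall>v\<in>V. E u v \<longleftrightarrow> E (\<phi> u) (\<phi> v)) \<and>
     (\<forall>v\<in>V. \<phi> (\<phi> v) = v) \<and> \<phi> x = y \<and>
     {{u, w} | u w. u \<in> near_side V E x y \<and> w \<in> near_side V E y x \<and> E u w}
       = {{u, \<phi> u} | u. u \<in> near_side V E x y} \<and>
     (\<forall>v\<in>equi_side V E x y. \<phi> v = v)"

definition reflective :: "'a set \<Rightarrow> ('a \<Rightarrow> 'a \<Rightarrow> bool) \<Rightarrow> bool" where
  "reflective V E \<longleftrightarrow> (\<forall>x y. E x y \<longrightarrow> (\<exists>\<phi>. is_reflection V E x y \<phi>))"

definition neg_lap_eigenvalue :: "'a set \<Rightarrow> ('a \<Rightarrow> 'a \<Rightarrow> bool) \<Rightarrow> real \<Rightarrow> bool" where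
  "neg_lap_eigenvalue V E \<mu> \<longleftrightarrow>
     (\<exists>f. (\<exists>v\<in>V. f v \<noteq> 0) \<and> (\<forall>x\<in>V. - laplacian E f x = \<mu> * f x))"

end

theory Submission
  imports Defs
begin

text \<open>
  For an edge \<open>x \<sim> y\<close> the reflection \<open>\<phi>\<close> maps the neighbours of \<open>x\<close> onto those of \<open>y\<close>:
  it sends \<open>y\<close> to \<open>x\<close>, fixes the \<open>b\<^sub>0 - 1 - b\<^sub>1\<close> common neighbours, and joins each of the
  remaining \<open>b\<^sub>1\<close> neighbours \<open>u\<close> to \<open>\<phi> u\<close> by an edge. Transporting a 1-Lipschitz \<open>f\<close> with
  \<open>f y - f x = 1\<close> along \<open>\<phi>\<close> therefore gives
  \<open>\<Delta>f(x) - \<Delta>f(y) \<ge> 2 + (b\<^sub>0 - 1 - b\<^sub>1) = 1 + b\<^sub>0 - b\<^sub>1\<close>, with equality for \<open>f = d(\<cdot>, x)\<close>.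
  The function equal to \<open>1\<close> on \<open>V\<^sub>y\<^sup>x\<close>, \<open>-1\<close> on \<open>V\<^sub>x\<^sup>y\<close> and \<open>0\<close> on \<open>V\<^sup>x\<^sup>y\<close> is an
  eigenfunction of \<open>-\<Delta>\<close> with this eigenvalue, and Lichnerowicz's argument (evaluate an
  eigenfunction on an edge where its gradient is maximal) shows that every positive eigenvalue
  is at least any lower bound on the curvature.
\<close>

locale connected_simple_graph =
  fixes V :: "'a set" and E :: "'a \<Rightarrow> 'a \<Rightarrow> bool"
  assumes finite_V: "finite V"
    and edge_in_V: "E u v \<Longrightarrow> u \<in> V \<and> v \<in> V"
    and edge_sym: "E u v \<Longrightarrow> E v u"
    and edge_irrefl: "\<not> E u u"
    and connected: "u \<in> V \<Longrightarrow> v \<in> V \<Longrightarrow> E\<^sup>*\<^sup>* u v"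
begin

lemma relpowp_edge_sym: "(E ^^ n) u v \<Longrightarrow> (E ^^ n) v u"
proof (induction n arbitrary: u v)
  case (Suc n)
  from Suc.prems obtain w where "(E ^^ n) u w" "E w v" by (rule relpowp_Suc_E)
  then show ?case using Suc.IH edge_sym relpowp_Suc_I2 by metis
qed simp

lemma gdist_sym: "gdist E u v = gdist E v u"
  unfolding gdist_def using relpowp_edge_sym by metis

lemma gdist_walk: "u \<in> V \<Longrightarrow> v \<in> V \<Longrightarrow> (E ^^ gdist E u v) u v"
  unfolding gdist_def by (rule LeastI_ex, rule rtranclp_imp_relpowp, rule connected)

lemma gdist_le_walk: "(E ^^ n) u v \<Longrightarrow> gdist E u v \<le> n"
  unfolding gdist_def by (rule Least_le)

lemma gdist_self [simp]: "gdist E u u = 0"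
  using gdist_le_walk[of 0 u u] by simp

lemma gdist_eq_0D: "u \<in> V \<Longrightarrow> v \<in> V \<Longrightarrow> gdist E u v = 0 \<Longrightarrow> u = v"
  using gdist_walk[of u v] by simp

lemma gdist_eq_1D: "u \<in> V \<Longrightarrow> v \<in> V \<Longrightarrow> gdist E u v = 1 \<Longrightarrow> E u v"
  using gdist_walk[of u v] by (metis relpowp_1)

lemma gdist_edge:
  assumes "E u v"
  shows "gdist E u v = 1"
proof -
  have "gdist E u v \<le> 1" using assms gdist_le_walk[of 1 u v] by (metis relpowp_1)
  moreover have "gdist E u v \<noteq> 0"
    using gdist_eq_0D edge_in_V[OF assms] edge_irrefl assms by blast
  ultimately show ?thesis by linarith
qed

lemma gdist_edge_le:
  assumes "E u v" and "w \<in> V"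
  shows "gdist E u w \<le> gdist E v w + 1"
proof -
  have "(E ^^ Suc (gdist E v w)) u w"
    using assms edge_in_V gdist_walk by (blast intro: relpowp_Suc_I2)
  then show ?thesis using gdist_le_walk by fastforce
qed

lemma gdist_two_steps:
  assumes "E p q" and "E q w"
  shows "w = p \<or> E p w \<or> gdist E p w = 2"
proof -
  have "p \<in> V" "w \<in> V" using assms edge_in_V by auto
  have "(E ^^ 2) p w" using assms by (auto simp: numeral_2_eq_2 intro: relpowp_Suc_I2)
  then have "gdist E p w \<le> 2" by (rule gdist_le_walk)
  then consider "gdist E p w = 0" | "gdist E p w = 1" | "gdist E p w = 2" by linarith
  then show ?thesis using gdist_eq_0D gdist_eq_1D \<open>p \<in> V\<close> \<open>w \<in> V\<close> by cases auto
qed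

lemma nbhd_subset_V: "nbhd E v \<subseteq> V"
  unfolding nbhd_def using edge_in_V by auto

lemma finite_nbhd: "finite (nbhd E v)"
  using nbhd_subset_V finite_V by (rule finite_subset)

lemma ex_edge:
  assumes "card V \<ge> 2"
  obtains x y where "E x y"
proof -
  obtain u v where "u \<in> V" "v \<in> V" "u \<noteq> v"
    using assms card_le_Suc0_iff_eq[OF finite_V] by force
  then have "E\<^sup>+\<^sup>+ u v" using connected by (auto dest: rtranclpD)
  then show thesis using that tranclpD by fast
qed

definition outer_nbhd :: "'a \<Rightarrow> 'a \<Rightarrow> 'a set" where
  "outer_nbhd p q = {w \<in> nbhd E q. gdist E p w = 2}"

lemma finite_outer_nbhd: "finite (outer_nbhd p q)"
  unfolding outer_nbhd_def using finite_nbhd by simp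

lemma sum_nbhd_split:
  assumes "E p q"
  shows "(\<Sum>w\<in>nbhd E q. h w) = h p + (\<Sum>w\<in>nbhd E p \<inter> nbhd E q. h w) + (\<Sum>w\<in>outer_nbhd p q. h w)"
proof -
  define common outer where "common = nbhd E p \<inter> nbhd E q" and "outer = outer_nbhd p q"
  have decomp: "nbhd E q = insert p (common \<union> outer)"
    using gdist_two_steps[OF assms] assms edge_sym gdist_edge
    unfolding common_def outer_def outer_nbhd_def nbhd_def by auto
  have "p \<notin> common \<union> outer"
    using edge_irrefl unfolding common_def outer_def outer_nbhd_def nbhd_def by auto
  moreover have "common \<inter> outer = {}"
    using gdist_edge unfolding common_def outer_def outer_nbhd_def nbhd_def by auto
  moreover have "finite common" "finite outer"
    unfolding common_def outer_def using finite_nbhd finite_outer_nbhd by auto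
  ultimately have "sum h (nbhd E q) = h p + sum h common + sum h outer"
    unfolding decomp by (simp add: sum.union_disjoint add.assoc)
  then show ?thesis unfolding common_def outer_def .
qed

lemma finite_edge_diffs: "finite {\<bar>f u - f v\<bar> | u v. E u v}"
proof -
  have "{\<bar>f u - f v\<bar> | u v. E u v} = (\<lambda>(u, v). \<bar>f u - f v\<bar>) ` {(u, v). E u v}" by auto
  moreover have "finite {(u, v). E u v}"
    by (rule finite_subset[of _ "V \<times> V"]) (use edge_in_V finite_V in auto)
  ultimately show ?thesis by simp
qed

lemma edge_diff_le_Max: "E u v \<Longrightarrow> \<bar>f u - f v\<bar> \<le> Max {\<bar>f u - f v\<bar> | u v. E u v}"
  using finite_edge_diffs by (intro Max_ge) auto

lemma ollivier_curvature_eqI: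
  assumes lower: "\<And>f. f y - f x = 1 \<Longrightarrow> (\<And>u v. E u v \<Longrightarrow> \<bar>f u - f v\<bar> \<le> 1)
      \<Longrightarrow> k \<le> laplacian E f x - laplacian E f y"
    and "E x y" and f0: "f0 y - f0 x = 1" "\<And>u v. E u v \<Longrightarrow> \<bar>f0 u - f0 v\<bar> \<le> 1"
    and attained: "laplacian E f0 x - laplacian E f0 y = k"
  shows "ollivier_curvature E x y = k"
  unfolding ollivier_curvature_def
proof (rule cInf_eq_minimum)
  have "\<bar>f0 y - f0 x\<bar> = 1" using f0(1) by simp
  then have "1 \<in> {\<bar>f0 u - f0 v\<bar> | u v. E u v}"
    using edge_sym[OF \<open>E x y\<close>] by (intro CollectI exI[of _ y] exI[of _ x]) simp
  then have "Max {\<bar>f0 u - f0 v\<bar> | u v. E u v} = 1"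
    using f0(2) by (intro Max_eqI[OF finite_edge_diffs]) auto
  then have "\<exists>f. k = laplacian E f x - laplacian E f y
      \<and> f y - f x = 1 \<and> Max {\<bar>f u - f v\<bar> | u v. E u v} = 1"
    using f0(1) attained by (intro exI[of _ f0]) simp
  then show "k \<in> {laplacian E f x - laplacian E f y | f.
      f y - f x = 1 \<and> Max {\<bar>f u - f v\<bar> | u v. E u v} = 1}"
    by simp
next
  fix s assume "s \<in> {laplacian E f x - laplacian E f y | f.
      f y - f x = 1 \<and> Max {\<bar>f u - f v\<bar> | u v. E u v} = 1}"
  then obtain f where s: "s = laplacian E f x - laplacian E f y"
    and "f y - f x = 1" and "Max {\<bar>f u - f v\<bar> | u v. E u v} = 1" by blast
  then have "k \<le> laplacian E f x - laplacian E f y"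
    using edge_diff_le_Max[of _ _ f] by (intro lower) auto
  then show "k \<le> s" unfolding s .
qed

lemma eigenfunction_nonconstant_on_edge:
  assumes "\<mu> \<noteq> 0" and eig: "\<And>v. v \<in> V \<Longrightarrow> - laplacian E f v = \<mu> * f v"
    and "v \<in> V" and "f v \<noteq> 0"
  obtains p q where "E p q" and "f p \<noteq> f q"
proof -
  have "laplacian E f v \<noteq> 0" using eig[OF \<open>v \<in> V\<close>] assms(1,4) by auto
  then obtain w where "w \<in> nbhd E v" "f w - f v \<noteq> 0"
    using sum.neutral[of "nbhd E v" "\<lambda>w. f w - f v"] unfolding laplacian_def by blast
  then show thesis using that[of v w] unfolding nbhd_def by simp
qed

lemma ex_steepest_edge:
  fixes f :: "'a \<Rightarrow> real"
  assumes "E p0 q0" and "f p0 \<noteq> f q0"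
  obtains p q where "E p q" and "f q - f p > 0" and "\<And>u v. E u v \<Longrightarrow> \<bar>f u - f v\<bar> \<le> f q - f p"
proof -
  let ?M = "Max {\<bar>f u - f v\<bar> | u v. E u v}"
  have "?M \<in> {\<bar>f u - f v\<bar> | u v. E u v}"
    using finite_edge_diffs assms(1) by (intro Max_in) auto
  then obtain u v where uv: "E u v" "\<bar>f u - f v\<bar> = ?M" by auto
  have pos: "?M > 0" using edge_diff_le_Max[OF assms(1), of f] assms(2) by linarith
  obtain p q where "E p q" "f q - f p = ?M"
  proof (cases "f u \<le> f v")
    case True
    then show thesis using that[of u v] uv by simp
  next
    case False
    then show thesis using that[of v u] uv edge_sym by simp
  qed
  then show thesis using pos by (intro that[of p q]) (simp_all add: edge_diff_le_Max)
qed

lemma laplacian_scale: "laplacian E (\<lambda>v. f v / M) v = laplacian E f v / M"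
  unfolding laplacian_def by (simp add: sum_divide_distrib diff_divide_distrib)

lemma lichnerowicz_bound:
  assumes lower: "\<And>x y f. E x y \<Longrightarrow> f y - f x = 1 \<Longrightarrow> (\<And>u v. E u v \<Longrightarrow> \<bar>f u - f v\<bar> \<le> 1)
      \<Longrightarrow> k \<le> laplacian E f x - laplacian E f y"
    and "\<mu> > 0" and "neg_lap_eigenvalue V E \<mu>"
  shows "k \<le> \<mu>"
proof -
  obtain f v where "v \<in> V" "f v \<noteq> 0" and eig: "\<And>v. v \<in> V \<Longrightarrow> - laplacian E f v = \<mu> * f v"
    using assms(3) unfolding neg_lap_eigenvalue_def by auto
  then obtain p0 q0 where "E p0 q0" "f p0 \<noteq> f q0"
    using \<open>\<mu> > 0\<close> by (auto intro: eigenfunction_nonconstant_on_edge[of \<mu> f v])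
  then obtain p q where pq: "E p q" "f q - f p > 0"
    and steepest: "\<And>u v. E u v \<Longrightarrow> \<bar>f u - f v\<bar> \<le> f q - f p"
    by (rule ex_steepest_edge) blast
  define M where "M = f q - f p"
  let ?h = "\<lambda>v. f v / M"
  have "?h q - ?h p = 1" using pq(2) unfolding M_def by (simp add: diff_divide_distrib[symmetric])
  moreover have "\<bar>?h u - ?h v\<bar> \<le> 1" if "E u v" for u v
    using steepest[OF that] pq(2) unfolding M_def by (simp add: diff_divide_distrib[symmetric])
  ultimately have "k \<le> laplacian E ?h p - laplacian E ?h q" by (rule lower[OF pq(1)])
  also have "\<dots> = \<mu> * (f q - f p) / M"
  proof -
    have "laplacian E f p = - (\<mu> * f p)" "laplacian E f q = - (\<mu> * f q)"
      using eig edge_in_V[OF pq(1)] by (metis minus_minus)+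
    then show ?thesis unfolding laplacian_scale diff_divide_distrib[symmetric] by (simp add: algebra_simps)
  qed
  also have "\<dots> = \<mu>" using pq(2) unfolding M_def by simp
  finally show ?thesis .
qed

end

lemma connected_simple_graphI:
  "simple_graph V E \<Longrightarrow> connected_graph V E \<Longrightarrow> connected_simple_graph V E"
  unfolding simple_graph_def connected_graph_def by unfold_locales auto

locale distance_regular_graph = connected_simple_graph +
  fixes b :: "nat \<Rightarrow> nat"
  assumes card_farther_nbhd:
    "x \<in> V \<Longrightarrow> z \<in> V \<Longrightarrow> card {w. E z w \<and> gdist E x w = gdist E x z + 1} = b (gdist E x z)"

lemma distance_regular_graphI:
  assumes "simple_graph V E" and "connected_graph V E" and "distance_regular V E L b c"
  shows "distance_regular_graph V E b"
proof (intro distance_regular_graph.intro distance_regular_graph_axioms.intro)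
  show "connected_simple_graph V E" using assms(1,2) by (rule connected_simple_graphI)
  fix x z assume "x \<in> V" "z \<in> V"
  then show "card {w. E z w \<and> gdist E x w = gdist E x z + 1} = b (gdist E x z)"
    using assms(3) unfolding distance_regular_def by simp
qed

context distance_regular_graph
begin

abbreviation kappa :: real where
  "kappa \<equiv> 1 + real (b 0) - real (b 1)"

lemma card_nbhd:
  assumes "v \<in> V"
  shows "card (nbhd E v) = b 0"
proof -
  have "nbhd E v = {w. E v w \<and> gdist E v w = gdist E v v + 1}"
    unfolding nbhd_def using gdist_edge by auto
  then show ?thesis using card_farther_nbhd[OF assms assms] by simp
qed

lemma card_outer_nbhd:
  assumes "E p q"
  shows "card (outer_nbhd p q) = b 1"
proof -
  have "outer_nbhd p q = {w. E q w \<and> gdist E p w = gdist E p q + 1}"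
    using gdist_edge[OF assms] unfolding outer_nbhd_def nbhd_def by auto
  then show ?thesis using card_farther_nbhd[of p q] edge_in_V[OF assms] gdist_edge[OF assms] by simp
qed

lemma kappa_eq_card_common_nbhd:
  assumes "E p q"
  shows "kappa = 2 + real (card (nbhd E p \<inter> nbhd E q))"
proof -
  have "real (card (nbhd E q)) = 1 + real (card (nbhd E p \<inter> nbhd E q)) + real (card (outer_nbhd p q))"
    using sum_nbhd_split[OF assms, of "\<lambda>_. 1::real"] by simp
  then show ?thesis using card_nbhd card_outer_nbhd[OF assms] edge_in_V[OF assms] by simp
qed

end

locale graph_reflection = connected_simple_graph +
  fixes x y :: 'a and \<phi> :: "'a \<Rightarrow> 'a"
  assumes edge_xy: "E x y" and reflection: "is_reflection V E x y \<phi>"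
begin

abbreviation "Vx \<equiv> near_side V E x y"
abbreviation "Vy \<equiv> near_side V E y x"
abbreviation "Vxy \<equiv> equi_side V E x y"

lemma phi_in_V: "v \<in> V \<Longrightarrow> \<phi> v \<in> V"
  and phi_edge_iff: "u \<in> V \<Longrightarrow> v \<in> V \<Longrightarrow> E (\<phi> u) (\<phi> v) \<longleftrightarrow> E u v"
  and phi_phi: "v \<in> V \<Longrightarrow> \<phi> (\<phi> v) = v"
  and phi_x: "\<phi> x = y"
  and cross_edges: "{{u, w} | u w. u \<in> Vx \<and> w \<in> Vy \<and> E u w} = {{u, \<phi> u} | u. u \<in> Vx}"
  and phi_fixes_equi: "v \<in> Vxy \<Longrightarrow> \<phi> v = v"
  using reflection unfolding is_reflection_def by (auto dest: bij_betwE)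

lemma x_in_V: "x \<in> V" and y_in_V: "y \<in> V"
  using edge_xy edge_in_V by auto

lemma phi_y: "\<phi> y = x"
  using phi_phi[OF x_in_V] phi_x by simp

lemma phi_edge: "E u v \<Longrightarrow> E (\<phi> u) (\<phi> v)"
  using phi_edge_iff edge_in_V by blast

lemma inj_on_phi: "inj_on \<phi> V"
  by (metis inj_onI phi_phi)

lemma side_cases:
  assumes "v \<in> V"
  obtains "v \<in> Vx" | "v \<in> Vy" | "v \<in> Vxy"
  using assms unfolding near_side_def equi_side_def by fastforce

lemma near_sides_disjoint: "v \<in> Vx \<Longrightarrow> v \<notin> Vy"
  and near_equi_disjoint: "v \<in> Vxy \<Longrightarrow> v \<notin> Vx" "v \<in> Vxy \<Longrightarrow> v \<notin> Vy"
  unfolding near_side_def equi_side_def by auto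

lemma relpowp_phi: "(E ^^ n) u v \<Longrightarrow> (E ^^ n) (\<phi> u) (\<phi> v)"
proof (induction n arbitrary: v)
  case (Suc n)
  from Suc.prems obtain w where "(E ^^ n) u w" "E w v" by (rule relpowp_Suc_E)
  then show ?case using Suc.IH phi_edge relpowp_Suc_I by metis
qed simp

lemma gdist_phi:
  assumes "u \<in> V" and "v \<in> V"
  shows "gdist E (\<phi> u) (\<phi> v) = gdist E u v"
proof -
  have "(E ^^ n) (\<phi> u) (\<phi> v) \<longleftrightarrow> (E ^^ n) u v" for n
    using relpowp_phi[of n u v] relpowp_phi[of n "\<phi> u" "\<phi> v"] phi_phi assms by auto
  then show ?thesis unfolding gdist_def by simp
qed

lemma phi_near_x: "u \<in> Vx \<Longrightarrow> \<phi> u \<in> Vy"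
  and phi_near_y: "u \<in> Vy \<Longrightarrow> \<phi> u \<in> Vx"
  using gdist_phi[of _ x] gdist_phi[of _ y] x_in_V y_in_V phi_x phi_y phi_in_V
  unfolding near_side_def by auto

lemma edge_phi_near:
  assumes "u \<in> Vx"
  shows "E u (\<phi> u)"
proof -
  have "{u, \<phi> u} \<in> {{u, w} | u w. u \<in> Vx \<and> w \<in> Vy \<and> E u w}"
    using cross_edges assms by auto
  then obtain a c where "{u, \<phi> u} = {a, c}" "E a c" by auto
  then show ?thesis using edge_sym by (auto simp: doubleton_eq_iff)
qed

lemma cross_edge_eq_phi:
  assumes "u \<in> Vx" and "w \<in> Vy" and "E u w"
  shows "w = \<phi> u"
proof -
  have "{u, w} \<in> {{u, \<phi> u} | u. u \<in> Vx}"
    using cross_edges[symmetric] assms by blast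
  then obtain u' where "u' \<in> Vx" "{u, w} = {u', \<phi> u'}" by auto
  then show ?thesis using near_sides_disjoint assms(2) by (auto simp: doubleton_eq_iff)
qed

lemma nbhd_phi:
  assumes "v \<in> V"
  shows "nbhd E (\<phi> v) = \<phi> ` nbhd E v"
proof
  show "\<phi> ` nbhd E v \<subseteq> nbhd E (\<phi> v)" using phi_edge unfolding nbhd_def by auto
  show "nbhd E (\<phi> v) \<subseteq> \<phi> ` nbhd E v"
  proof
    fix w assume "w \<in> nbhd E (\<phi> v)"
    then have "E (\<phi> v) w" unfolding nbhd_def by simp
    then have "E v (\<phi> w)" and "w = \<phi> (\<phi> w)"
      using phi_edge[of "\<phi> v" w] phi_phi assms edge_in_V by auto
    then show "w \<in> \<phi> ` nbhd E v" unfolding nbhd_def by blast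
  qed
qed

lemma laplacian_phi:
  assumes "v \<in> V"
  shows "laplacian E f (\<phi> v) = (\<Sum>u\<in>nbhd E v. f (\<phi> u) - f (\<phi> v))"
  unfolding laplacian_def nbhd_phi[OF assms]
  using inj_on_subset[OF inj_on_phi nbhd_subset_V] by (simp add: sum.reindex)

lemma common_nbhd_subset_equi:
  assumes "a \<in> Vx"
  shows "nbhd E a \<inter> nbhd E (\<phi> a) \<subseteq> Vxy"
proof
  fix w assume "w \<in> nbhd E a \<inter> nbhd E (\<phi> a)"
  then have "E a w" "E (\<phi> a) w" unfolding nbhd_def by auto
  have "w \<notin> Vy"
    using cross_edge_eq_phi[OF assms _ \<open>E a w\<close>] \<open>E (\<phi> a) w\<close> edge_irrefl by blast
  moreover have "w \<notin> Vx"
  proof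
    assume "w \<in> Vx"
    then have "\<phi> a = \<phi> w"
      using cross_edge_eq_phi phi_near_x[OF assms] edge_sym[OF \<open>E (\<phi> a) w\<close>] by blast
    then have "a = w" using inj_on_phi edge_in_V \<open>E a w\<close> by (auto dest: inj_onD)
    then show False using \<open>E a w\<close> edge_irrefl by simp
  qed
  ultimately show "w \<in> Vxy" using side_cases edge_in_V[OF \<open>E a w\<close>] by blast
qed

lemma outer_nbhd_subset_near_y:
  assumes "v \<in> Vy"
  shows "outer_nbhd (\<phi> v) v \<subseteq> Vy"
proof
  fix w assume "w \<in> outer_nbhd (\<phi> v) v"
  then have "E v w" and dist2: "gdist E (\<phi> v) w = 2" unfolding outer_nbhd_def nbhd_def by auto
  have "w \<notin> Vx"
  proof
    assume "w \<in> Vx"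
    then have "v = \<phi> w" by (rule cross_edge_eq_phi[OF _ assms edge_sym[OF \<open>E v w\<close>]])
    then have "w = \<phi> v" using phi_phi edge_in_V[OF \<open>E v w\<close>] by auto
    then show False using dist2 by simp
  qed
  moreover have "w \<notin> Vxy"
  proof
    assume "w \<in> Vxy"
    then have "E (\<phi> v) w" using phi_edge[OF \<open>E v w\<close>] phi_fixes_equi by simp
    then show False using dist2 gdist_edge by simp
  qed
  ultimately show "w \<in> Vy" using side_cases edge_in_V[OF \<open>E v w\<close>] by blast
qed

definition side_sign :: "'a \<Rightarrow> real" where
  "side_sign v = of_bool (v \<in> Vy) - of_bool (v \<in> Vx)"

lemma side_sign_near_x: "v \<in> Vx \<Longrightarrow> side_sign v = -1"
  and side_sign_near_y: "v \<in> Vy \<Longrightarrow> side_sign v = 1"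
  and side_sign_equi: "v \<in> Vxy \<Longrightarrow> side_sign v = 0"
  unfolding side_sign_def using near_sides_disjoint near_equi_disjoint by auto

lemma side_sign_phi:
  assumes "v \<in> V"
  shows "side_sign (\<phi> v) = - side_sign v"
  using assms
proof (cases rule: side_cases)
  case 1
  then show ?thesis using phi_near_x side_sign_near_x side_sign_near_y by simp
next
  case 2
  then show ?thesis using phi_near_y side_sign_near_x side_sign_near_y by simp
next
  case 3
  then show ?thesis using phi_fixes_equi side_sign_equi by simp
qed

lemma laplacian_side_sign_phi:
  assumes "v \<in> V"
  shows "laplacian E side_sign (\<phi> v) = - laplacian E side_sign v"
proof -
  have "laplacian E side_sign (\<phi> v) = (\<Sum>u\<in>nbhd E v. side_sign (\<phi> u) - side_sign (\<phi> v))"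
    by (rule laplacian_phi[OF assms])
  also have "\<dots> = (\<Sum>u\<in>nbhd E v. - (side_sign u - side_sign v))"
    using side_sign_phi nbhd_subset_V assms by (intro sum.cong) auto
  also have "\<dots> = - laplacian E side_sign v"
    unfolding laplacian_def by (simp add: sum_subtractf)
  finally show ?thesis .
qed

end

locale distance_regular_reflection = distance_regular_graph + graph_reflection
begin

lemma curvature_lower_bound:
  assumes "f y - f x = 1" and lip: "\<And>u v. E u v \<Longrightarrow> \<bar>f u - f v\<bar> \<le> 1"
  shows "kappa \<le> laplacian E f x - laplacian E f y"
proof -
  define h where "h u = 1 + f u - f (\<phi> u)" for u
  have "laplacian E f x - laplacian E f y = (\<Sum>u\<in>nbhd E x. (f u - f x) - (f (\<phi> u) - f y))"
    using laplacian_phi[OF x_in_V, of f] phi_x unfolding laplacian_def by (simp add: sum_subtractf)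
  also have "\<dots> = (\<Sum>u\<in>nbhd E x. h u)"
    unfolding h_def using assms(1) by (intro sum.cong refl) linarith
  also have "\<dots> = h y + (\<Sum>u\<in>nbhd E y \<inter> nbhd E x. h u) + (\<Sum>u\<in>outer_nbhd y x. h u)"
    by (rule sum_nbhd_split[OF edge_sym[OF edge_xy]])
  also have "\<dots> \<ge> 2 + real (card (nbhd E y \<inter> nbhd E x)) + 0"
  proof -
    have "h y = 2" unfolding h_def using phi_y assms(1) by simp
    moreover have "h u = 1" if "u \<in> nbhd E y \<inter> nbhd E x" for u
    proof -
      have "u \<in> Vxy" using that gdist_edge edge_sym edge_in_V unfolding nbhd_def equi_side_def by auto
      then show ?thesis using phi_fixes_equi unfolding h_def by simp
    qed
    moreover have "0 \<le> h u" if "u \<in> outer_nbhd y x" for u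
    proof -
      have "u \<in> Vx" using that gdist_edge gdist_sym edge_sym edge_in_V
        unfolding outer_nbhd_def nbhd_def near_side_def by auto
      then have "\<bar>f u - f (\<phi> u)\<bar> \<le> 1" by (intro lip edge_phi_near)
      then show ?thesis unfolding h_def abs_le_iff by linarith
    qed
    ultimately show ?thesis by (simp add: sum_nonneg)
  qed
  finally show ?thesis using kappa_eq_card_common_nbhd[OF edge_sym[OF edge_xy]] by linarith
qed

lemma laplacian_gdist_difference:
  "laplacian E (\<lambda>v. real (gdist E v x)) x - laplacian E (\<lambda>v. real (gdist E v x)) y = kappa"
proof -
  let ?f = "\<lambda>v. real (gdist E v x)"
  have "laplacian E ?f x = (\<Sum>w\<in>nbhd E x. 1)"
    unfolding laplacian_def by (rule sum.cong) (auto simp: nbhd_def gdist_edge edge_sym)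
  then have lap_x: "laplacian E ?f x = real (b 0)" using card_nbhd[OF x_in_V] by simp
  have "laplacian E ?f y = (?f x - ?f y) + (\<Sum>w\<in>nbhd E x \<inter> nbhd E y. ?f w - ?f y)
      + (\<Sum>w\<in>outer_nbhd x y. ?f w - ?f y)"
    unfolding laplacian_def by (rule sum_nbhd_split[OF edge_xy])
  also have "\<dots> = -1 + 0 + (\<Sum>w\<in>outer_nbhd x y. 1)"
    using gdist_edge edge_sym edge_xy gdist_sym unfolding outer_nbhd_def nbhd_def
    by (intro arg_cong2[where f="(+)"] sum.neutral sum.cong) auto
  finally have "laplacian E ?f y = real (b 1) - 1" using card_outer_nbhd[OF edge_xy] by simp
  then show ?thesis using lap_x by simp
qed

lemma ollivier_curvature_edge: "ollivier_curvature E x y = kappa"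
proof (rule ollivier_curvature_eqI[OF curvature_lower_bound edge_xy _ _ laplacian_gdist_difference])
  show "real (gdist E y x) - real (gdist E x x) = 1"
    using gdist_edge[OF edge_sym[OF edge_xy]] by simp
  show "\<bar>real (gdist E u x) - real (gdist E v x)\<bar> \<le> 1" if "E u v" for u v
    using gdist_edge_le[OF that x_in_V] gdist_edge_le[OF edge_sym[OF that] x_in_V]
    by (simp add: abs_le_iff)
qed

lemma neg_laplacian_side_sign_near_y:
  assumes "v \<in> Vy"
  shows "- laplacian E side_sign v = kappa"
proof -
  define a where "a = \<phi> v"
  have "v \<in> V" using assms unfolding near_side_def by simp
  have "a \<in> Vx" and "\<phi> a = v" using phi_near_y[OF assms] phi_phi[OF \<open>v \<in> V\<close>] unfolding a_def by auto
  then have "E a v" using edge_phi_near by metis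
  have "- laplacian E side_sign v = (\<Sum>w\<in>nbhd E v. 1 - side_sign w)"
    unfolding laplacian_def side_sign_near_y[OF assms] by (simp add: sum_negf[symmetric])
  also have "\<dots> = (1 - side_sign a) + (\<Sum>w\<in>nbhd E a \<inter> nbhd E v. 1 - side_sign w)
      + (\<Sum>w\<in>outer_nbhd a v. 1 - side_sign w)"
    by (rule sum_nbhd_split[OF \<open>E a v\<close>])
  also have "\<dots> = 2 + (\<Sum>w\<in>nbhd E a \<inter> nbhd E v. 1) + 0"
    using side_sign_near_x[OF \<open>a \<in> Vx\<close>] side_sign_equi side_sign_near_y
      common_nbhd_subset_equi[OF \<open>a \<in> Vx\<close>] outer_nbhd_subset_near_y[OF assms]
    unfolding \<open>\<phi> a = v\<close> a_def[symmetric]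
    by (intro arg_cong2[where f="(+)"] sum.neutral sum.cong) auto
  also have "\<dots> = kappa" using kappa_eq_card_common_nbhd[OF \<open>E a v\<close>] by simp
  finally show ?thesis .
qed

lemma neg_laplacian_side_sign:
  assumes "v \<in> V"
  shows "- laplacian E side_sign v = kappa * side_sign v"
  using assms
proof (cases rule: side_cases)
  case 1
  then have "- laplacian E side_sign v = laplacian E side_sign (\<phi> v)"
    using laplacian_side_sign_phi[OF assms] by simp
  then show ?thesis
    using neg_laplacian_side_sign_near_y[OF phi_near_x[OF 1]] side_sign_near_x[OF 1] by simp
next
  case 2
  then show ?thesis using neg_laplacian_side_sign_near_y side_sign_near_y by simp
next
  case 3
  then show ?thesis using laplacian_side_sign_phi[OF assms] phi_fixes_equi side_sign_equi by simp
qed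

lemma neg_lap_eigenvalue_kappa: "neg_lap_eigenvalue V E kappa"
  unfolding neg_lap_eigenvalue_def
proof (intro exI conjI)
  have "y \<in> Vy" using y_in_V gdist_edge[OF edge_sym[OF edge_xy]] unfolding near_side_def by simp
  then show "\<exists>v\<in>V. side_sign v \<noteq> 0" using y_in_V side_sign_near_y by force
  show "\<forall>v\<in>V. - laplacian E side_sign v = kappa * side_sign v"
    using neg_laplacian_side_sign by blast
qed

end

context distance_regular_graph
begin

lemma reflection_at_edge:
  assumes "reflective V E" and "E x y"
  obtains \<phi> where "distance_regular_reflection V E b x y \<phi>"
proof -
  from assms obtain \<phi> where "is_reflection V E x y \<phi>" unfolding reflective_def by blast
  then have "distance_regular_reflection V E b x y \<phi>"
    using assms(2) by unfold_locales
  then show thesis by (rule that)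
qed

lemma reflective_curvature_lower_bound:
  assumes "reflective V E" and "E x y" and "f y - f x = 1" and "\<And>u v. E u v \<Longrightarrow> \<bar>f u - f v\<bar> \<le> 1"
  shows "kappa \<le> laplacian E f x - laplacian E f y"
proof -
  obtain \<phi> where "distance_regular_reflection V E b x y \<phi>" using reflection_at_edge assms(1,2) .
  then show ?thesis by (rule distance_regular_reflection.curvature_lower_bound) (fact assms(3), fact assms(4))
qed

lemma reflective_ollivier_curvature:
  assumes "reflective V E" and "E x y"
  shows "ollivier_curvature E x y = kappa"
proof -
  obtain \<phi> where "distance_regular_reflection V E b x y \<phi>" using reflection_at_edge assms .
  then show ?thesis by (rule distance_regular_reflection.ollivier_curvature_edge)
qed

end

theorem theorem2p13:
  fixes V :: "'a set" and E :: "'a \<Rightarrow> 'a \<Rightarrow> bool"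
    and L :: nat and b c :: "nat \<Rightarrow> nat"
  assumes "simple_graph V E" and "connected_graph V E" and "card V \<ge> 2"
    and "locally_connected V E" and "reflective V E"
    and "distance_regular V E L b c" and "c 1 = 1"
  shows "(\<forall>x y. E x y \<longrightarrow> ollivier_curvature E x y = 1 + real (b 0) - real (b 1))
     \<and> (1 + real (b 0) - real (b 1) > 0 \<and> neg_lap_eigenvalue V E (1 + real (b 0) - real (b 1))
        \<and> (\<forall>\<mu>. \<mu> > 0 \<and> neg_lap_eigenvalue V E \<mu> \<longrightarrow> 1 + real (b 0) - real (b 1) \<le> \<mu>))"
proof -
  interpret distance_regular_graph V E b using assms(1,2,6) by (rule distance_regular_graphI)
  obtain x y where "E x y" using ex_edge assms(3) by blast
  then obtain \<phi> where "distance_regular_reflection V E b x y \<phi>" using reflection_at_edge assms(5) by blast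
  then interpret distance_regular_reflection V E b x y \<phi> .
  have "kappa > 0" using kappa_eq_card_common_nbhd[OF \<open>E x y\<close>] by simp
  moreover have "\<forall>x y. E x y \<longrightarrow> ollivier_curvature E x y = kappa"
    using reflective_ollivier_curvature assms(5) by blast
  moreover have "kappa \<le> \<mu>" if "\<mu> > 0" and "neg_lap_eigenvalue V E \<mu>" for \<mu>
    by (rule lichnerowicz_bound[OF _ that]) (rule reflective_curvature_lower_bound[OF assms(5)])
  ultimately show ?thesis using neg_lap_eigenvalue_kappa by blast
qed

end
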